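(* Let $F$ be a finite field of order $p^n$, where $p$ is a prime and $n\geq 1$, and let $G=\Gamma(Tr(F))$. Then $$|E(G)|=\tfrac12\,p^n\,(p^{2n}-1)\,(p^{2n}-p^n-1).$$
   Context: For a ring $S$ with identity whose center is not all of $S$, the commuting graph $\Gamma(S)$ is the simple graph with vertex set $S\setminus Z(S)$ ($Z(S)$ the center), in which two distinct vertices $a,b$ are adjacent iff $ab=ba$; $E(G)$ denotes the edge set. $Tr(F)$ denotes the ring of all $2\times 2$ upper triangular matrices over $F$. *)

theory Defs
  imports "HOL-Analysis.Analysis"
begin

definition Tr :: "(('a::field) ^2^2) set" where
  "Tr = {A. A $ 2 $ 1 = 0}"

definition mat_center :: "(('a::semiring_1) ^'n^'n) set \<Rightarrow> ('a ^'n^'n) set" where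
  "mat_center S = {A \<in> S. \<forall>B \<in> S. A ** B = B ** A}"

definition commuting_graph_edges :: "(('a::semiring_1) ^'n^'n) set \<Rightarrow> ('a ^'n^'n) set set" where
  "commuting_graph_edges S =
     {{A, B} | A B. A \<in> S - mat_center S \<and> B \<in> S - mat_center S \<and> A \<noteq> B \<and> A ** B = B ** A}"

end

theory Submission imports Defs begin

(* Write a matrix of Tr(F) as [[a, b], [0, c]]. Two such matrices A, B commute iff
   (a_A - c_A) b_B = b_A (a_B - c_B), so the center consists of the q = |F| scalar matrices and
   the centralizer of a noncentral A is a line through the origin in the (a - c, b)-plane times
   a free coordinate c, hence has q^2 elements. Every one of the q^3 - q vertices therefore has
   degree q^2 - q - 1, and counting ordered adjacent pairs gives 2 |E| = (q^3 - q)(q^2 - q - 1). *)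

lemma card_pairs_eq_twice_card_doubletons:
  assumes fin: "finite {(a, b). R a b}"
    and sym: "\<And>a b. R a b \<Longrightarrow> R b a" and irrefl: "\<And>a. \<not> R a a"
  shows "card {(a, b). R a b} = 2 * card {{a, b} | a b. R a b}"
proof -
  let ?E = "{{a, b} | a b. R a b}"
  define pairs where "pairs e = {(a, b). R a b \<and> {a, b} = e}" for e
  have union: "{(a, b). R a b} = (\<Union>e\<in>?E. pairs e)" by (auto simp: pairs_def)
  have "?E = (\<lambda>(a, b). {a, b}) ` {(a, b). R a b}" by auto
  then have fin_E: "finite ?E" using fin by simp
  have fin_pairs: "finite (pairs e)" for e
    using fin by (rule rev_finite_subset) (auto simp: pairs_def)
  have disjoint: "\<forall>e\<in>?E. \<forall>e'\<in>?E. e \<noteq> e' \<longrightarrow> pairs e \<inter> pairs e' = {}"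
    by (auto simp: pairs_def)
  have card_pairs: "card (pairs e) = 2" if "e \<in> ?E" for e
  proof -
    obtain a b where "R a b" "e = {a, b}" using \<open>e \<in> ?E\<close> by blast
    moreover have "a \<noteq> b" using \<open>R a b\<close> irrefl by blast
    moreover have "pairs e = {(a, b), (b, a)}"
      using \<open>R a b\<close> \<open>e = {a, b}\<close> sym by (auto simp: pairs_def doubleton_eq_iff)
    ultimately show ?thesis by simp
  qed
  have "card {(a, b). R a b} = (\<Sum>e\<in>?E. card (pairs e))"
    unfolding union using fin_pairs by (intro card_UN_disjoint[OF fin_E _ disjoint]) simp
  also have "\<dots> = (\<Sum>e\<in>?E. 2)" using card_pairs by simp
  finally show ?thesis by simp
qed

lemma card_field_ge_two: "CARD('a::{field, finite}) \<ge> 2"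
proof -
  have "card {0, 1 :: 'a} = 2" by simp
  then show ?thesis by (metis card_mono finite subset_UNIV)
qed

lemma card_line_through_origin:
  fixes d b :: "'a::{field, finite}"
  assumes "d \<noteq> 0 \<or> b \<noteq> 0"
  shows "card {(u, v). d * v = b * u} = CARD('a)"
proof (cases "b = 0")
  case True
  then have "{(u, v). d * v = b * u} = (\<lambda>u. (u, 0)) ` UNIV" using assms by auto
  then show ?thesis by (simp add: card_image inj_on_def)
next
  case False
  have "(u, v) \<in> (\<lambda>v. (d * v / b, v)) ` UNIV" if "d * v = b * u" for u v
  proof
    show "(u, v) = (d * v / b, v)" using that False by (simp add: field_simps)
  qed simp
  with False have "{(u, v). d * v = b * u} = (\<lambda>v. (d * v / b, v)) ` UNIV"
    by auto
  then show ?thesis by (simp add: card_image inj_on_def)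
qed

definition upper_tri :: "'a::zero \<Rightarrow> 'a \<Rightarrow> 'a \<Rightarrow> 'a^2^2" where
  "upper_tri a b c = (\<chi> i j. if i = 1 then (if j = 1 then a else b) else (if j = 1 then 0 else c))"

lemma upper_tri_nth [simp]:
  "upper_tri a b c $ 1 $ 1 = a" "upper_tri a b c $ 1 $ 2 = b"
  "upper_tri a b c $ 2 $ 1 = 0" "upper_tri a b c $ 2 $ 2 = c"
  by (simp_all add: upper_tri_def)

lemma upper_tri_eq_iff [simp]: "upper_tri a b c = upper_tri x y z \<longleftrightarrow> a = x \<and> b = y \<and> c = z"
  by (metis upper_tri_nth)

lemma upper_tri_in_Tr [simp]: "upper_tri a b c \<in> Tr"
  by (simp add: Tr_def)

lemma Tr_eq_upper_tri: "A \<in> Tr \<Longrightarrow> A = upper_tri (A $ 1 $ 1) (A $ 1 $ 2) (A $ 2 $ 2)"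
  unfolding Tr_def by (auto simp: vec_eq_iff forall_2)

lemma card_Tr: "card (Tr :: ('a::{field, finite}^2^2) set) = CARD('a) ^ 3"
proof -
  have "A \<in> (\<lambda>(a, b, c). upper_tri a b c) ` UNIV" if "A \<in> Tr" for A :: "'a^2^2"
  proof
    show "A = (\<lambda>(a, b, c). upper_tri a b c) (A $ 1 $ 1, A $ 1 $ 2, A $ 2 $ 2)"
      using Tr_eq_upper_tri[OF that] by simp
  qed simp
  then have "Tr = (\<lambda>(a, b, c). upper_tri a b c) ` (UNIV :: ('a \<times> 'a \<times> 'a) set)"
    by auto
  moreover have "inj (\<lambda>(a, b, c). upper_tri a b (c :: 'a))" by (auto simp: inj_def)
  ultimately have "card (Tr :: ('a^2^2) set) = card (UNIV :: ('a \<times> 'a \<times> 'a) set)"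
    by (metis card_image)
  then show ?thesis by (simp add: power3_eq_cube)
qed

lemma upper_tri_mult:
  "upper_tri a b c ** upper_tri x y z = upper_tri (a * x) (a * y + b * z) (c * (z :: 'a::semiring_1))"
  by (simp add: matrix_matrix_mult_def vec_eq_iff forall_2 sum_2 upper_tri_def)

lemma upper_tri_commute_iff:
  "upper_tri a b c ** upper_tri x y z = upper_tri x y z ** upper_tri a b c \<longleftrightarrow>
     (a - c) * y = b * (x - (z :: 'a::field))"
  by (auto simp: upper_tri_mult algebra_simps)

lemma Tr_commute_iff:
  fixes A B :: "'a::field^2^2"
  assumes "A \<in> Tr" "B \<in> Tr"
  shows "A ** B = B ** A \<longleftrightarrow> (A$1$1 - A$2$2) * B$1$2 = A$1$2 * (B$1$1 - B$2$2)"
  using upper_tri_commute_iff Tr_eq_upper_tri[OF assms(1)] Tr_eq_upper_tri[OF assms(2)] by metis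

lemma mat_center_Tr: "mat_center (Tr :: ('a::field^2^2) set) = range (\<lambda>x. upper_tri x 0 x)"
proof (intro set_eqI iffI)
  fix A :: "'a^2^2"
  assume "A \<in> mat_center Tr"
  then have "A \<in> Tr" and comm: "\<And>B. B \<in> Tr \<Longrightarrow> A ** B = B ** A"
    by (auto simp: mat_center_def)
  have diag: "A$1$1 = A$2$2"
    using comm[of "upper_tri 0 1 0"] Tr_commute_iff[OF \<open>A \<in> Tr\<close>] by simp
  moreover have "A$1$2 = 0"
    using comm[of "upper_tri 1 0 0"] Tr_commute_iff[OF \<open>A \<in> Tr\<close>] diag by simp
  ultimately have "A = upper_tri (A$1$1) 0 (A$1$1)"
    using Tr_eq_upper_tri[OF \<open>A \<in> Tr\<close>] by simp
  then show "A \<in> range (\<lambda>x. upper_tri x 0 x)" by (rule range_eqI)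
next
  fix A :: "'a^2^2"
  assume "A \<in> range (\<lambda>x. upper_tri x 0 x)"
  then show "A \<in> mat_center Tr"
    by (auto simp: mat_center_def Tr_commute_iff)
qed

lemma card_mat_center_Tr: "card (mat_center (Tr :: ('a::{field, finite}^2^2) set)) = CARD('a)"
  unfolding mat_center_Tr by (simp add: card_image inj_on_def)

lemma Tr_centralizer_eq:
  fixes A :: "'a::field^2^2"
  assumes "A \<in> Tr"
  shows "{B \<in> Tr. A ** B = B ** A} =
    (\<lambda>((u, v), w). upper_tri (u + w) v w) ` ({(u, v). (A$1$1 - A$2$2) * v = A$1$2 * u} \<times> UNIV)"
  (is "?C = ?f ` (?L \<times> UNIV)")
proof (intro set_eqI iffI)
  fix B
  assume "B \<in> ?C"
  then have "B \<in> Tr" and "((B$1$1 - B$2$2, B$1$2), B$2$2) \<in> ?L \<times> UNIV"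
    using Tr_commute_iff[OF assms] by auto
  moreover have "B = ?f ((B$1$1 - B$2$2, B$1$2), B$2$2)"
    using Tr_eq_upper_tri[OF \<open>B \<in> Tr\<close>] by simp
  ultimately show "B \<in> ?f ` (?L \<times> UNIV)" by blast
qed (auto simp: Tr_commute_iff[OF assms])

lemma card_Tr_centralizer:
  fixes A :: "'a::{field, finite}^2^2"
  assumes "A \<in> Tr - mat_center Tr"
  shows "card {B \<in> Tr. A ** B = B ** A} = CARD('a) ^ 2"
proof -
  let ?L = "{(u, v). (A$1$1 - A$2$2) * v = A$1$2 * u}"
  have "A$1$1 - A$2$2 \<noteq> 0 \<or> A$1$2 \<noteq> 0"
    using assms Tr_eq_upper_tri[of A] by (auto simp: mat_center_Tr)
  then have "card ?L = CARD('a)" by (rule card_line_through_origin)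
  moreover have "inj (\<lambda>((u, v), w). upper_tri (u + w) v (w :: 'a))"
    by (auto simp: inj_def)
  ultimately show ?thesis
    using assms by (simp add: Tr_centralizer_eq card_image inj_on_subset card_cartesian_product
        power2_eq_square)
qed

lemma card_commuting_graph_edges_Tr:
  "2 * card (commuting_graph_edges (Tr :: ('a::{field, finite}^2^2) set)) =
     (CARD('a) ^ 3 - CARD('a)) * (CARD('a) ^ 2 - CARD('a) - 1)"
proof -
  let ?q = "CARD('a)"
  let ?Z = "mat_center (Tr :: ('a^2^2) set)"
  define V where "V = (Tr :: ('a^2^2) set) - ?Z"
  define adj where "adj A B \<longleftrightarrow> A \<in> V \<and> B \<in> V \<and> A \<noteq> B \<and> A ** B = B ** A" for A B :: "'a^2^2"
  have Z_sub: "?Z \<subseteq> Tr" by (auto simp: mat_center_def)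
  have degree: "card {B. adj A B} = ?q ^ 2 - (?q + 1)" if "A \<in> V" for A
  proof -
    let ?C = "{B \<in> Tr. A ** B = B ** A}"
    have "A \<in> Tr" "A \<notin> ?Z" using \<open>A \<in> V\<close> by (auto simp: V_def)
    then have "{B. adj A B} = ?C - insert A ?Z" and "insert A ?Z \<subseteq> ?C"
      using Z_sub by (auto simp: adj_def V_def mat_center_def)
    moreover have "card (insert A ?Z) = ?q + 1"
      using \<open>A \<notin> ?Z\<close> card_mat_center_Tr by simp
    ultimately show ?thesis
      using card_Tr_centralizer[of A] \<open>A \<in> V\<close> by (simp add: V_def card_Diff_subset)
  qed
  have "{(A, B). adj A B} = Sigma V (\<lambda>A. {B. adj A B})" by (auto simp: adj_def)
  then have sum_degrees: "card {(A, B). adj A B} = (\<Sum>A\<in>V. card {B. adj A B})" by simp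
  have "2 * card (commuting_graph_edges (Tr :: ('a^2^2) set)) = card {(A, B). adj A B}"
    unfolding commuting_graph_edges_def
    by (subst card_pairs_eq_twice_card_doubletons) (auto simp: adj_def V_def)
  also have "\<dots> = (\<Sum>A\<in>V. card {B. adj A B})" by (rule sum_degrees)
  also have "\<dots> = card V * (?q ^ 2 - (?q + 1))" using degree by simp
  also have "card V = ?q ^ 3 - ?q"
    unfolding V_def by (simp add: card_Diff_subset[OF _ Z_sub] card_Tr card_mat_center_Tr)
  finally show ?thesis by simp
qed

theorem corollary2p3:
  fixes p n :: nat
  assumes "prime p" and "n \<ge> 1"
    and "CARD('a::{field, finite}) = p ^ n"
  shows "real (card (commuting_graph_edges (Tr :: ('a ^2^2) set))) =
           1/2 * real (p ^ n) * (real p ^ (2*n) - 1) * (real p ^ (2*n) - real p ^ n - 1)"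
proof -
  define q where "q = CARD('a)"
  have "q \<ge> 2" unfolding q_def by (rule card_field_ge_two)
  moreover have "2 * q \<le> q * q" using \<open>q \<ge> 2\<close> by (rule mult_le_mono1)
  ultimately have "q \<le> q ^ 3" and "q + 1 \<le> q ^ 2"
    unfolding power2_eq_square power3_eq_cube by (simp_all, linarith)
  moreover have "real (2 * card (commuting_graph_edges (Tr :: ('a^2^2) set))) =
      real ((q ^ 3 - q) * (q ^ 2 - q - 1))"
    unfolding q_def by (simp only: card_commuting_graph_edges_Tr)
  ultimately have "2 * real (card (commuting_graph_edges (Tr :: ('a^2^2) set))) =
      (real q ^ 3 - real q) * (real q ^ 2 - real q - 1)"
    by (simp add: of_nat_diff)
  also have "\<dots> = real q * (real q ^ 2 - 1) * (real q ^ 2 - real q - 1)"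
    by (simp add: power2_eq_square power3_eq_cube algebra_simps)
  finally show ?thesis
    using assms(3) by (simp add: q_def power_mult mult.commute[of 2 n])
qed

end
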